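(* Let $n,m\geq1$. Let $p_{ij}\in\mathbb{R}$ ($i=1,\ldots,n$, $j=1,\ldots,m$), $w_{j}>0$, $d_{j}>0$, $h_{j}\in\mathbb{R}$ ($j=1,\ldots,m$), $b_{ik}\in\mathbb{R}\cup\{-\infty\}$ ($i,k=1,\ldots,n$), nonzero reals $c_{1},\ldots,c_{n}$, and reals $f_{i}\leq g_{i}$ ($i=1,\ldots,n$). Consider the problem of minimizing over $\bm{x}=(x_{1},\ldots,x_{n})^{T}\in\mathbb{R}^{n}$ $$\max_{1\leq j\leq m}\Big(w_{j}\max_{1\leq i\leq n}|x_{i}-p_{ij}|+h_{j}\Big)$$ subject to $\max_{1\leq i\leq n}|x_{i}-p_{ij}|\leq d_{j}$ ($j=1,\ldots,m$), $b_{ik}+c_{k}x_{k}\leq c_{i}x_{i}$ ($i,k=1,\ldots,n$), and $f_{i}\leq x_{i}\leq g_{i}$ ($i=1,\ldots,n$). Suppose that 1. $\max_{1\leq i_{1},\ldots,i_{k-1}\leq n,\ i_{0}=i_{k}=i}(b_{i_{0}i_{1}}+\cdots+b_{i_{k-1}i_{k}})\leq0$ for all $i,k=1,\ldots,n$; 2. $b_{ik}^{\ast}+\max\{\max_{1\leq l\leq m}(c_{k}p_{kl}-|c_{k}|d_{l}),\min\{c_{k}f_{k},c_{k}g_{k}\}\}\leq\min\{\min_{1\leq j\leq m}(c_{i}p_{ij}+|c_{i}|d_{j}),\max\{c_{i}f_{i},c_{i}g_{i}\}\}$ for all $i,k=1,\ldots,n$. Then the minimum value of the problem is $$\theta=\max_{1\leq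 i,k\leq n}\max_{1\leq j,l\leq m}\max\Bigg\{\frac{|c_{i}|w_{l}h_{j}+|c_{k}|w_{j}h_{l}}{|c_{i}|w_{l}+|c_{k}|w_{j}}+\frac{w_{j}w_{l}}{|c_{k}|w_{j}+|c_{i}|w_{l}}(b_{ik}^{\ast}-c_{i}p_{ij}+c_{k}p_{kl}),$$ $$h_{j}+\frac{w_{j}}{|c_{i}|}\big(b_{ik}^{\ast}-c_{i}p_{ij}+\max\{c_{k}p_{kl}-|c_{k}|d_{l},\min\{c_{k}f_{k},c_{k}g_{k}\}\}\big),$$ $$h_{l}+\frac{w_{l}}{|c_{k}|}\big(b_{ik}^{\ast}-\min\{c_{i}p_{ij}+|c_{i}|d_{j},\max\{c_{i}f_{i},c_{i}g_{i}\}\}+c_{k}p_{kl}\big)\Bigg\},$$ and all solution vectors $\bm{x}=(x_{i})$ have entries $x_{i}=y_{i}/c_{i}$, where $y_{i}=\max_{1\leq k\leq n}(b_{ik}^{\ast}+v_{k})$, $i=1,\ldots,n$, and the parameter vector $\bm{v}=(v_{k})$ satisfies, for each $k=1,\ldots,n$, $$\max_{1\leq j\leq m}\max\left\{\frac{|c_{k}|(h_{j}-\theta)}{w_{j}}+c_{k}p_{kj},\ c_{k}p_{kj}-|c_{k}|d_{j},\ \min\{c_{k}f_{k},c_{k}g_{k}\}\right\}\leq v_{k}$$ $$\leq\min_{1\leq i\leq n}\left(\min_{1\leq j\leq m}\min\left\{\frac{|c_{i}|(\theta-h_{j})}{w_{j}}+c_{i}p_{ij},\ c_{i}p_{ij}+|c_{i}|d_{j},\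 \max\{c_{i}f_{i},c_{i}g_{i}\}\right\}-b_{ik}^{\ast}\right).$$
   Context: Conventions: $-\infty+a=-\infty$ for any $a$, and $a-(-\infty)=+\infty$ for real $a$. For $i,k=1,\ldots,n$ define $$\beta_{ik}=\max_{1\leq l\leq n-1}\ \max_{1\leq i_{1},\ldots,i_{l-1}\leq n,\ i_{0}=i,\ i_{l}=k}(b_{i_{0}i_{1}}+\cdots+b_{i_{l-1}i_{l}})$$ (an empty maximum is $-\infty$), and set $b_{ik}^{\ast}=\beta_{ik}$ if $i\neq k$ and $b_{ii}^{\ast}=\max\{\beta_{ii},0\}$. *)

theory Defs
  imports Complex_Main "HOL-Library.Extended_Real"
begin

text \<open>Elements of
  \<real> \<union> {-\<infinity>} are represented by extended reals (assumed \<noteq> \<infinity>).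
  In ereal, -\<infinity> + a = -\<infinity> for finite a, and a - (-\<infinity>) = \<infinity>.\<close>

definition path_weight :: "(nat \<Rightarrow> nat \<Rightarrow> ereal) \<Rightarrow> (nat \<Rightarrow> nat) \<Rightarrow> nat \<Rightarrow> ereal" where
  "path_weight b p l = (\<Sum>t<l. b (p t) (p (Suc t)))"

text \<open>beta_ik: maximum over path lengths 1..n-1 and intermediate vertices in {1..n};
  the empty supremum in ereal is -\<infinity>.\<close>
definition beta :: "nat \<Rightarrow> (nat \<Rightarrow> nat \<Rightarrow> ereal) \<Rightarrow> nat \<Rightarrow> nat \<Rightarrow> ereal" where
  "beta n b i k = Sup {path_weight b p l | l p. 1 \<le> l \<and> l \<le> n - 1 \<and> p 0 = i \<and> p l = k
                        \<and> (\<forall>t\<in>{1..<l}. p t \<in> {1..n})}"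

definition bstar :: "nat \<Rightarrow> (nat \<Rightarrow> nat \<Rightarrow> ereal) \<Rightarrow> nat \<Rightarrow> nat \<Rightarrow> ereal" where
  "bstar n b i k = (if i = k then max (beta n b i i) 0 else beta n b i k)"

definition cheb :: "nat \<Rightarrow> (nat \<Rightarrow> real) \<Rightarrow> (nat \<Rightarrow> nat \<Rightarrow> real) \<Rightarrow> nat \<Rightarrow> real" where
  "cheb n x p j = Max ((\<lambda>i. \<bar>x i - p i j\<bar>) ` {1..n})"

definition objective :: "nat \<Rightarrow> nat \<Rightarrow> (nat \<Rightarrow> nat \<Rightarrow> real) \<Rightarrow> (nat \<Rightarrow> real) \<Rightarrow> (nat \<Rightarrow> real)
    \<Rightarrow> (nat \<Rightarrow> real) \<Rightarrow> real" where
  "objective n m p w h x = Max ((\<lambda>j. w j * cheb n x p j + h j) ` {1..m})"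

definition feasible :: "nat \<Rightarrow> nat \<Rightarrow> (nat \<Rightarrow> nat \<Rightarrow> real) \<Rightarrow> (nat \<Rightarrow> real) \<Rightarrow> (nat \<Rightarrow> nat \<Rightarrow> ereal)
    \<Rightarrow> (nat \<Rightarrow> real) \<Rightarrow> (nat \<Rightarrow> real) \<Rightarrow> (nat \<Rightarrow> real) \<Rightarrow> (nat \<Rightarrow> real) \<Rightarrow> bool" where
  "feasible n m p d b c f g x \<longleftrightarrow>
     (\<forall>j\<in>{1..m}. cheb n x p j \<le> d j) \<and>
     (\<forall>i\<in>{1..n}. \<forall>k\<in>{1..n}. b i k + ereal (c k * x k) \<le> ereal (c i * x i)) \<and>
     (\<forall>i\<in>{1..n}. f i \<le> x i \<and> x i \<le> g i)"

definition lowq :: "(nat \<Rightarrow> nat \<Rightarrow> real) \<Rightarrow> (nat \<Rightarrow> real) \<Rightarrow> (nat \<Rightarrow> real) \<Rightarrow> (nat \<Rightarrow> real)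
    \<Rightarrow> (nat \<Rightarrow> real) \<Rightarrow> nat \<Rightarrow> nat \<Rightarrow> real" where
  "lowq p d c f g k l = max (c k * p k l - \<bar>c k\<bar> * d l) (min (c k * f k) (c k * g k))"

definition uppq :: "(nat \<Rightarrow> nat \<Rightarrow> real) \<Rightarrow> (nat \<Rightarrow> real) \<Rightarrow> (nat \<Rightarrow> real) \<Rightarrow> (nat \<Rightarrow> real)
    \<Rightarrow> (nat \<Rightarrow> real) \<Rightarrow> nat \<Rightarrow> nat \<Rightarrow> real" where
  "uppq p d c f g i j = min (c i * p i j + \<bar>c i\<bar> * d j) (max (c i * f i) (c i * g i))"

definition theta :: "nat \<Rightarrow> nat \<Rightarrow> (nat \<Rightarrow> nat \<Rightarrow> real) \<Rightarrow> (nat \<Rightarrow> real) \<Rightarrow> (nat \<Rightarrow> real)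
    \<Rightarrow> (nat \<Rightarrow> real) \<Rightarrow> (nat \<Rightarrow> nat \<Rightarrow> ereal) \<Rightarrow> (nat \<Rightarrow> real) \<Rightarrow> (nat \<Rightarrow> real) \<Rightarrow> (nat \<Rightarrow> real) \<Rightarrow> ereal" where
  "theta n m p w d h b c f g = Max ((\<lambda>(i, k, j, l).
     max (max
       (ereal ((\<bar>c i\<bar> * w l * h j + \<bar>c k\<bar> * w j * h l) / (\<bar>c i\<bar> * w l + \<bar>c k\<bar> * w j))
         + ereal (w j * w l / (\<bar>c k\<bar> * w j + \<bar>c i\<bar> * w l))
           * (bstar n b i k - ereal (c i * p i j) + ereal (c k * p k l)))
       (ereal (h j) + ereal (w j / \<bar>c i\<bar>)
           * (bstar n b i k - ereal (c i * p i j) + ereal (lowq p d c f g k l))))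
       (ereal (h l) + ereal (w l / \<bar>c k\<bar>)
           * (bstar n b i k - ereal (uppq p d c f g i j) + ereal (c k * p k l))))
     ` ({1..n} \<times> {1..n} \<times> {1..m} \<times> {1..m}))"

end

theory Submission
  imports Defs
begin

text \<open>Substitute \<open>y\<^sub>i = c\<^sub>i x\<^sub>i\<close>. For a fixed objective level \<open>t\<close>, the distance, box and
  objective constraints on \<open>x\<^sub>i\<close> become an interval \<open>lower_bound i t \<le> y\<^sub>i \<le> upper_bound i t\<close>,
  and the remaining constraints say \<open>B \<otimes> y \<le> y\<close> in max-plus algebra. Since \<open>B\<close> has no
  positive cycles, the solutions of \<open>B \<otimes> y \<le> y\<close> are exactly the vectors \<open>y = B\<^sup>* \<otimes> v\<close>, so
  the level \<open>t\<close> is attainable iff some \<open>v \<ge> lower_bound t\<close> has \<open>B\<^sup>* \<otimes> v \<le> upper_bound t\<close>,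
  i.e. iff \<open>b\<^sup>*\<^sub>i\<^sub>k + lower_bound k t \<le> upper_bound i t\<close> for all \<open>i, k\<close>. For each pair of points
  \<open>j, l\<close> this is a conjunction of three linear inequalities in \<open>t\<close>, and the least \<open>t\<close> satisfying
  all of them is the maximum \<open>\<theta>\<close> of the three terms.\<close>

lemma path_weight_Suc: "path_weight b q (Suc L) = path_weight b q L + b (q L) (q (Suc L))"
  by (simp add: path_weight_def)

lemma path_weight_Suc_shift:
  "path_weight b q (Suc L) = b (q 0) (q 1) + path_weight b (\<lambda>u. q (Suc u)) L"
  unfolding path_weight_def sum.lessThan_Suc_shift by simp

lemma path_vertices_in_range:
  fixes q :: "nat \<Rightarrow> nat"
  assumes "q 0 \<in> {1..n}" "q L \<in> {1..n}" "\<forall>t\<in>{1..<L}. q t \<in> {1..n}"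
  shows "\<forall>u\<le>L. q u \<in> {1..n}"
proof (intro allI impI)
  fix u
  assume "u \<le> L"
  then consider "u = 0" | "u = L" | "u \<in> {1..<L}"
    by fastforce
  then show "q u \<in> {1..n}"
    using assms by cases auto
qed

lemma beta_le_iff:
  "beta n b i k \<le> z \<longleftrightarrow>
     (\<forall>l q. 1 \<le> l \<and> l \<le> n - 1 \<and> q 0 = i \<and> q l = k \<and> (\<forall>t\<in>{1..<l}. q t \<in> {1..n})
        \<longrightarrow> path_weight b q l \<le> z)"
  unfolding beta_def by (auto simp: Sup_le_iff)

lemma bstar_diag_nonneg: "0 \<le> bstar n b i i"
  by (simp add: bstar_def)

lemma path_weight_add_le_potential:
  assumes pot: "\<forall>i\<in>{1..n}. \<forall>k\<in>{1..n}. b i k + ereal (y k) \<le> ereal (y i)"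
    and "\<forall>u\<le>L. q u \<in> {1..n}"
  shows "path_weight b q L + ereal (y (q L)) \<le> ereal (y (q 0))"
  using assms(2)
proof (induction L)
  case 0
  then show ?case by (simp add: path_weight_def)
next
  case (Suc L)
  have "path_weight b q (Suc L) + ereal (y (q (Suc L)))
      = path_weight b q L + (b (q L) (q (Suc L)) + ereal (y (q (Suc L))))"
    by (simp add: path_weight_Suc add.assoc)
  also have "\<dots> \<le> path_weight b q L + ereal (y (q L))"
    using pot Suc.prems by (intro add_left_mono) auto
  also have "\<dots> \<le> ereal (y (q 0))"
    using Suc by auto
  finally show ?case .
qed

lemma bstar_add_le_potential:
  assumes pot: "\<forall>i\<in>{1..n}. \<forall>k\<in>{1..n}. b i k + ereal (y k) \<le> ereal (y i)"
    and i: "i \<in> {1..n}" and k: "k \<in> {1..n}"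
  shows "bstar n b i k + ereal (y k) \<le> ereal (y i)"
proof -
  have "beta n b i k \<le> ereal (y i - y k)"
    unfolding beta_le_iff
  proof (intro allI impI)
    fix l q
    assume "1 \<le> l \<and> l \<le> n - 1 \<and> q 0 = i \<and> q l = k \<and> (\<forall>t\<in>{1..<l}. q t \<in> {1..n})"
    then have "path_weight b q l + ereal (y k) \<le> ereal (y i)"
      using path_weight_add_le_potential[OF pot path_vertices_in_range] i k by auto
    then show "path_weight b q l \<le> ereal (y i - y k)"
      by (cases "path_weight b q l") auto
  qed
  then have "beta n b i k + ereal (y k) \<le> ereal (y i)"
    by (cases "beta n b i k") auto
  then show ?thesis
    unfolding bstar_def by (auto simp: max_def)
qed

lemma path_weight_remove_cycle:
  fixes b :: "nat \<Rightarrow> nat \<Rightarrow> ereal"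
  assumes st: "s < t" "t \<le> L" "q s = q t"
    and cycle: "path_weight b (\<lambda>u. q (s + u)) (t - s) \<le> 0"
  shows "path_weight b q L
           \<le> path_weight b (\<lambda>u. if u \<le> s then q u else q (u + (t - s))) (L - (t - s))"
    (is "_ \<le> path_weight b ?q' ?L'")
proof -
  define F where "F u = b (q u) (q (Suc u))" for u
  have "sum F {s..<t} = path_weight b (\<lambda>u. q (s + u)) (t - s)"
    unfolding path_weight_def lessThan_atLeast0 sum.atLeastLessThan_shift_0[of F s t]
    by (simp add: F_def)
  then have "sum F {s..<t} \<le> 0"
    using cycle by simp
  then have "sum F {0..<s} + sum F {s..<t} + sum F {t..<L} \<le> sum F {0..<s} + sum F {t..<L}"
    by (intro add_right_mono) (use add_left_mono[of _ 0] in fastforce)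
  moreover have "path_weight b q L = sum F {0..<s} + sum F {s..<t} + sum F {t..<L}"
    unfolding path_weight_def lessThan_atLeast0 F_def[symmetric]
    using st by (simp add: sum.atLeastLessThan_concat)
  ultimately have "path_weight b q L \<le> sum F {0..<s} + sum F {t..<L}"
    by simp
  also have "sum F {t..<L} = (\<Sum>u\<in>{s..<?L'}. F (u + (t - s)))"
  proof -
    have "s + (t - s) = t" "?L' + (t - s) = L"
      using st by auto
    then show ?thesis
      using sum.shift_bounds_nat_ivl[of F s "t - s" ?L'] by metis
  qed
  also have "sum F {0..<s} + (\<Sum>u\<in>{s..<?L'}. F (u + (t - s))) = path_weight b ?q' ?L'"
  proof -
    define G where "G u = b (?q' u) (?q' (Suc u))" for u
    have "sum F {0..<s} = sum G {0..<s}"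
      by (rule sum.cong) (auto simp: F_def G_def)
    moreover have "(\<Sum>u\<in>{s..<?L'}. F (u + (t - s))) = sum G {s..<?L'}"
      using st by (intro sum.cong) (auto simp: F_def G_def)
    moreover have "path_weight b ?q' ?L' = sum G {0..<?L'}"
      by (simp add: path_weight_def G_def lessThan_atLeast0)
    moreover have "sum G {0..<?L'} = sum G {0..<s} + sum G {s..<?L'}"
      using st by (intro sum.atLeastLessThan_concat[symmetric]) auto
    ultimately show ?thesis
      by simp
  qed
  finally show ?thesis .
qed

lemma path_has_repeated_vertex:
  fixes q :: "nat \<Rightarrow> nat"
  assumes "n \<le> L" "\<forall>u\<le>L. q u \<in> {1..n}"
  obtains s t where "s < t" "t \<le> n" "q s = q t"
proof -
  have "\<not> inj_on q {0..n}"
  proof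
    assume "inj_on q {0..n}"
    moreover have "q ` {0..n} \<subseteq> {1..n}"
      using assms by auto
    ultimately have "card {0..n} \<le> card {1..n}"
      by (intro card_inj_on_le) auto
    then show False by simp
  qed
  then obtain x y where "x \<le> n" "y \<le> n" "q x = q y" "x \<noteq> y"
    unfolding inj_on_def by auto
  then show thesis
    using that[of x y] that[of y x] by (cases "x < y") auto
qed

definition bstar_mult :: "nat \<Rightarrow> (nat \<Rightarrow> nat \<Rightarrow> ereal) \<Rightarrow> (nat \<Rightarrow> real) \<Rightarrow> nat \<Rightarrow> ereal" where
  "bstar_mult n b v i = Max ((\<lambda>k. bstar n b i k + ereal (v k)) ` {1..n})"

lemma bstar_mult_le_iff:
  assumes "i \<in> {1..n}"
  shows "bstar_mult n b v i \<le> z \<longleftrightarrow> (\<forall>k\<in>{1..n}. bstar n b i k + ereal (v k) \<le> z)"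
  unfolding bstar_mult_def using assms by (subst Max_le_iff) auto

lemma bstar_mult_attained:
  assumes "i \<in> {1..n}"
  obtains k where "k \<in> {1..n}" "bstar_mult n b v i = bstar n b i k + ereal (v k)"
proof -
  have "bstar_mult n b v i \<in> (\<lambda>k. bstar n b i k + ereal (v k)) ` {1..n}"
    unfolding bstar_mult_def using assms by (intro Max_in) auto
  then show thesis
    using that by blast
qed

lemma le_bstar_mult:
  assumes "i \<in> {1..n}"
  shows "ereal (v i) \<le> bstar_mult n b v i"
proof -
  have "ereal (v i) \<le> bstar n b i i + ereal (v i)"
    using add_right_mono[OF bstar_diag_nonneg] by simp
  also have "\<dots> \<le> bstar_mult n b v i"
    unfolding bstar_mult_def using assms by (intro Max_ge) auto
  finally show ?thesis .
qed

lemma bstar_mult_potential: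
  assumes "\<forall>i\<in>{1..n}. \<forall>k\<in>{1..n}. b i k + ereal (y k) \<le> ereal (y i)" and "i \<in> {1..n}"
  shows "bstar_mult n b y i = ereal (y i)"
proof (rule antisym)
  show "bstar_mult n b y i \<le> ereal (y i)"
    using assms by (simp add: bstar_mult_le_iff bstar_add_le_potential)
  show "ereal (y i) \<le> bstar_mult n b y i"
    using assms(2) by (rule le_bstar_mult)
qed

locale nonpositive_cycles =
  fixes n :: nat and b :: "nat \<Rightarrow> nat \<Rightarrow> ereal"
  assumes b_not_PInf: "\<forall>i\<in>{1..n}. \<forall>k\<in>{1..n}. b i k \<noteq> \<infinity>"
    and cycle_weight_nonpos: "\<forall>i\<in>{1..n}. \<forall>l\<in>{1..n}. \<forall>q. q 0 = i \<and> q l = i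
          \<and> (\<forall>t\<in>{1..<l}. q t \<in> {1..n}) \<longrightarrow> path_weight b q l \<le> 0"
begin

lemma path_weight_le_bstar:
  assumes "1 \<le> L" "\<forall>u\<le>L. q u \<in> {1..n}"
  shows "path_weight b q L \<le> bstar n b (q 0) (q L)"
  using assms
proof (induction L arbitrary: q rule: less_induct)
  case (less L)
  show ?case
  proof (cases "L \<le> n - 1")
    case True
    then have "path_weight b q L \<le> beta n b (q 0) (q L)"
      unfolding beta_def using less.prems by (intro Sup_upper) fastforce
    then show ?thesis
      unfolding bstar_def by (auto simp: le_max_iff_disj)
  next
    case False
    then have "n \<le> L"
      by simp
    then obtain s t where st: "s < t" "t \<le> n" "q s = q t"
      using path_has_repeated_vertex less.prems(2) by blast
    have "q s \<in> {1..n}" "t - s \<in> {1..n}" "\<forall>u\<in>{1..<t - s}. q (s + u) \<in> {1..n}"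
      using st less.prems \<open>n \<le> L\<close> by auto
    then have cycle: "path_weight b (\<lambda>u. q (s + u)) (t - s) \<le> 0"
      using cycle_weight_nonpos[rule_format, of "q s" "t - s" "\<lambda>u. q (s + u)"] st by auto
    show ?thesis
    proof (cases "s = 0 \<and> t = L")
      case True
      then have "path_weight b q L \<le> 0"
        using cycle by simp
      also have "0 \<le> bstar n b (q 0) (q L)"
        using True st bstar_diag_nonneg by simp
      finally show ?thesis .
    next
      case False
      let ?q' = "\<lambda>u. if u \<le> s then q u else q (u + (t - s))"
      let ?L' = "L - (t - s)"
      have "path_weight b q L \<le> path_weight b ?q' ?L'"
        using st \<open>\<not> L \<le> n - 1\<close> by (intro path_weight_remove_cycle cycle) auto
      also have "\<dots> \<le> bstar n b (?q' 0) (?q' ?L')"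
      proof (rule less.IH)
        show "?L' < L" "1 \<le> ?L'"
          using False st \<open>\<not> L \<le> n - 1\<close> by auto
        show "\<forall>u\<le>?L'. ?q' u \<in> {1..n}"
          using st less.prems by auto
      qed
      also have "?q' ?L' = q L"
        using st \<open>n \<le> L\<close> by (cases "L = t") auto
      finally show ?thesis
        by simp
    qed
  qed
qed

lemma b_le_bstar:
  assumes "i \<in> {1..n}" "k \<in> {1..n}"
  shows "b i k \<le> bstar n b i k"
  using path_weight_le_bstar[of 1 "\<lambda>u. if u = 0 then i else k"] assms
  by (simp add: path_weight_def)

lemma bstar_not_PInf:
  assumes i: "i \<in> {1..n}" and k: "k \<in> {1..n}"
  shows "bstar n b i k \<noteq> \<infinity>"
proof -
  define R where "R = max 0 (Max ((\<lambda>(i, k). real_of_ereal (b i k)) ` ({1..n} \<times> {1..n})))"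
  have b_le_R: "b i' k' \<le> ereal R" if "i' \<in> {1..n}" "k' \<in> {1..n}" for i' k'
  proof (cases "b i' k'")
    case (real r)
    have "r \<le> Max ((\<lambda>(i, k). real_of_ereal (b i k)) ` ({1..n} \<times> {1..n}))"
      using that real by (intro Max_ge) force+
    then show ?thesis
      using real unfolding R_def by (simp add: le_max_iff_disj)
  qed (use b_not_PInf that in auto)
  have "0 \<le> R"
    unfolding R_def by simp
  have "beta n b i k \<le> ereal (real (n - 1) * R)"
    unfolding beta_le_iff
  proof (intro allI impI)
    fix L q
    assume path: "1 \<le> L \<and> L \<le> n - 1 \<and> q 0 = i \<and> q L = k \<and> (\<forall>t\<in>{1..<L}. q t \<in> {1..n})"
    then have "\<forall>u\<le>L. q u \<in> {1..n}"
      using i k by (intro path_vertices_in_range) auto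
    then have "path_weight b q L \<le> (\<Sum>t<L. ereal R)"
      unfolding path_weight_def by (intro sum_mono b_le_R) auto
    also have "\<dots> \<le> ereal (real (n - 1) * R)"
      using path \<open>0 \<le> R\<close> by (simp add: mult_right_mono)
    finally show "path_weight b q L \<le> ereal (real (n - 1) * R)" .
  qed
  then show ?thesis
    unfolding bstar_def by (cases "beta n b i k") (auto simp: max_def)
qed

lemma bstar_cases:
  assumes "i \<in> {1..n}" "k \<in> {1..n}"
  obtains (MInf) "bstar n b i k = -\<infinity>" | (real) \<beta> where "bstar n b i k = ereal \<beta>"
  using bstar_not_PInf[OF assms] by (cases "bstar n b i k") auto

lemma b_add_bstar_le:
  assumes i: "i \<in> {1..n}" and k: "k \<in> {1..n}" and l: "l \<in> {1..n}"
  shows "b i k + bstar n b k l \<le> bstar n b i l"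
proof (cases "b i k")
  case MInf
  then show ?thesis
    using bstar_not_PInf[OF k l] by (cases "bstar n b k l") auto
next
  case PInf
  then show ?thesis
    using b_not_PInf i k by auto
next
  case (real r)
  have "beta n b k l \<le> bstar n b i l - ereal r"
    unfolding beta_le_iff
  proof (intro allI impI)
    fix L q
    assume path: "1 \<le> L \<and> L \<le> n - 1 \<and> q 0 = k \<and> q L = l \<and> (\<forall>t\<in>{1..<L}. q t \<in> {1..n})"
    let ?q' = "\<lambda>u. if u = 0 then i else q (u - 1)"
    have vertices: "\<forall>u\<le>L. q u \<in> {1..n}"
      using path k l by (intro path_vertices_in_range) auto
    have "\<forall>u\<le>Suc L. ?q' u \<in> {1..n}"
    proof (intro allI impI)
      fix u
      assume "u \<le> Suc L"
      then show "?q' u \<in> {1..n}"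
        using i vertices by (cases u) auto
    qed
    then have "path_weight b ?q' (Suc L) \<le> bstar n b i l"
      using path_weight_le_bstar[of "Suc L" ?q'] path by simp
    moreover have "path_weight b ?q' (Suc L) = ereal r + path_weight b q L"
      using path real by (simp add: path_weight_Suc_shift)
    ultimately show "path_weight b q L \<le> bstar n b i l - ereal r"
      by (simp add: ereal_le_minus add.commute)
  qed
  then have "ereal r + beta n b k l \<le> bstar n b i l"
    by (simp add: ereal_le_minus add.commute)
  then show ?thesis
    using b_le_bstar[OF i k] real unfolding bstar_def[of n b k l] by (auto simp: max_def)
qed

lemma bstar_mult_real:
  assumes i: "i \<in> {1..n}"
  shows "bstar_mult n b v i = ereal (real_of_ereal (bstar_mult n b v i))"
proof -
  obtain k where "k \<in> {1..n}" "bstar_mult n b v i = bstar n b i k + ereal (v k)"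
    using bstar_mult_attained[OF i] .
  then have "bstar_mult n b v i \<noteq> \<infinity>"
    using bstar_not_PInf[OF i] by auto
  moreover have "bstar_mult n b v i \<noteq> -\<infinity>"
    using le_bstar_mult[OF i, of v b] by auto
  ultimately show ?thesis
    by (cases "bstar_mult n b v i") auto
qed

lemma bstar_mult_subsolution:
  assumes i: "i \<in> {1..n}" and k: "k \<in> {1..n}"
  shows "b i k + bstar_mult n b v k \<le> bstar_mult n b v i"
proof -
  obtain l where l: "l \<in> {1..n}" and max_l: "bstar_mult n b v k = bstar n b k l + ereal (v l)"
    using bstar_mult_attained[OF k] .
  have "b i k + bstar_mult n b v k = (b i k + bstar n b k l) + ereal (v l)"
    by (simp add: max_l add.assoc)
  also have "\<dots> \<le> bstar n b i l + ereal (v l)"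
    using b_add_bstar_le[OF i k l] by (rule add_right_mono)
  also have "\<dots> \<le> bstar_mult n b v i"
    unfolding bstar_mult_def using l by (intro Max_ge) auto
  finally show ?thesis .
qed

end

lemma abs_diff_le_iff_scaled:
  fixes a x q r :: real
  assumes "a \<noteq> 0"
  shows "\<bar>x - q\<bar> \<le> r \<longleftrightarrow> a * q - \<bar>a\<bar> * r \<le> a * x \<and> a * x \<le> a * q + \<bar>a\<bar> * r"
proof -
  have "\<bar>x - q\<bar> \<le> r \<longleftrightarrow> \<bar>a\<bar> * \<bar>x - q\<bar> \<le> \<bar>a\<bar> * r"
    using assms by simp
  also have "\<bar>a\<bar> * \<bar>x - q\<bar> = \<bar>a * x - a * q\<bar>"
    by (simp add: abs_mult[symmetric] right_diff_distrib)
  finally show ?thesis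
    by (simp add: abs_le_iff) arith
qed

lemma weighted_abs_diff_le_iff_scaled:
  fixes a x q v h t :: real
  assumes "a \<noteq> 0" "v > 0"
  shows "v * \<bar>x - q\<bar> + h \<le> t \<longleftrightarrow>
           \<bar>a\<bar> * (h - t) / v + a * q \<le> a * x \<and> a * x \<le> \<bar>a\<bar> * (t - h) / v + a * q"
proof -
  have "v * \<bar>x - q\<bar> + h \<le> t \<longleftrightarrow> \<bar>x - q\<bar> \<le> (t - h) / v"
    using assms by (simp add: pos_le_divide_eq algebra_simps)
  also have "\<dots> \<longleftrightarrow> a * q - \<bar>a\<bar> * ((t - h) / v) \<le> a * x \<and> a * x \<le> a * q + \<bar>a\<bar> * ((t - h) / v)"
    using assms(1) by (rule abs_diff_le_iff_scaled)
  also have "a * q - \<bar>a\<bar> * ((t - h) / v) = \<bar>a\<bar> * (h - t) / v + a * q"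
    using assms(2) by (simp add: field_simps)
  also have "a * q + \<bar>a\<bar> * ((t - h) / v) = \<bar>a\<bar> * (t - h) / v + a * q"
    using assms(2) by (simp add: field_simps)
  finally show ?thesis .
qed

lemma interval_iff_scaled:
  fixes a x f g :: real
  assumes "a \<noteq> 0" "f \<le> g"
  shows "f \<le> x \<and> x \<le> g \<longleftrightarrow> min (a * f) (a * g) \<le> a * x \<and> a * x \<le> max (a * f) (a * g)"
proof (cases "a > 0")
  case True
  then show ?thesis
    using assms by (simp add: min_def max_def)
next
  case False
  then have "a < 0"
    using assms by simp
  then show ?thesis
    using assms by (auto simp: min_def max_def mult_le_cancel_left)
qed

lemma crossing_level_le_iff:
  fixes a a' v v' h h' t \<beta> q q' :: real
  assumes "a > 0" "a' > 0" "v > 0" "v' > 0"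
  shows "a' * (h' - t) / v' + q' + \<beta> \<le> a * (t - h) / v + q \<longleftrightarrow>
    (a * v' * h + a' * v * h') / (a * v' + a' * v) + v * v' / (a' * v + a * v') * (\<beta> - q + q') \<le> t"
proof -
  have denom_pos: "a * v' + a' * v > 0"
    using assms by (simp add: add_pos_pos)
  have "(a * v' * h + a' * v * h') / (a * v' + a' * v) + v * v' / (a' * v + a * v') * (\<beta> - q + q')
      = (a * v' * h + a' * v * h' + v * v' * (\<beta> - q + q')) / (a * v' + a' * v)"
    by (simp add: add_divide_distrib add.commute)
  also have "\<dots> \<le> t \<longleftrightarrow> a * v' * h + a' * v * h' + v * v' * (\<beta> - q + q') \<le> t * (a * v' + a' * v)"
    using denom_pos by (simp add: pos_divide_le_eq)
  also have "\<dots> \<longleftrightarrow> a' * (h' - t) / v' + q' + \<beta> \<le> a * (t - h) / v + q"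
    using assms by (simp add: field_simps)
  finally show ?thesis ..
qed

text \<open>The hypothesis \<open>\<beta> + L \<le> U\<close> discharges the one comparison that does not involve \<open>t\<close>.\<close>

lemma shifted_bounds_compatible_iff:
  fixes a a' v v' h h' t \<beta> q q' L U :: real
  assumes pos: "a > 0" "a' > 0" "v > 0" "v' > 0" and "\<beta> + L \<le> U"
  shows "max (a' * (h' - t) / v' + q') L + \<beta> \<le> min (a * (t - h) / v + q) U \<longleftrightarrow>
    max (max ((a * v' * h + a' * v * h') / (a * v' + a' * v) + v * v' / (a' * v + a * v') * (\<beta> - q + q'))
             (h + v / a * (\<beta> - q + L)))
        (h' + v' / a' * (\<beta> - U + q')) \<le> t"
    (is "max ?A L + \<beta> \<le> min ?B U \<longleftrightarrow> max (max ?T1 ?T2) ?T3 \<le> t")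
proof -
  have "max ?A L + \<beta> \<le> min ?B U \<longleftrightarrow> ?A + \<beta> \<le> ?B \<and> L + \<beta> \<le> ?B \<and> ?A + \<beta> \<le> U"
    using assms(5) by (auto simp: max_def min_def)
  also have "?A + \<beta> \<le> ?B \<longleftrightarrow> ?T1 \<le> t"
    using pos by (rule crossing_level_le_iff)
  also have "L + \<beta> \<le> ?B \<longleftrightarrow> ?T2 \<le> t"
    using pos by (simp add: field_simps)
  also have "?A + \<beta> \<le> U \<longleftrightarrow> ?T3 \<le> t"
    using pos by (simp add: field_simps)
  finally show ?thesis
    by simp
qed

locale location_problem = nonpositive_cycles n b
  for n :: nat and b :: "nat \<Rightarrow> nat \<Rightarrow> ereal" +
  fixes m :: nat and p :: "nat \<Rightarrow> nat \<Rightarrow> real" and w d h c f g :: "nat \<Rightarrow> real"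
  assumes n_pos: "n \<ge> 1" and m_pos: "m \<ge> 1"
    and w_pos: "\<forall>j\<in>{1..m}. w j > 0"
    and c_nonzero: "\<forall>i\<in>{1..n}. c i \<noteq> 0"
    and f_le_g: "\<forall>i\<in>{1..n}. f i \<le> g i"
    and constraints_compatible: "\<forall>i\<in>{1..n}. \<forall>k\<in>{1..n}.
       bstar n b i k + ereal (max (Max ((\<lambda>l. c k * p k l - \<bar>c k\<bar> * d l) ` {1..m})) (min (c k * f k) (c k * g k)))
         \<le> ereal (min (Min ((\<lambda>j. c i * p i j + \<bar>c i\<bar> * d j) ` {1..m})) (max (c i * f i) (c i * g i)))"
begin

definition lower_bound :: "nat \<Rightarrow> real \<Rightarrow> real" where
  "lower_bound k t = Max ((\<lambda>j. max (max (\<bar>c k\<bar> * (h j - t) / w j + c k * p k j)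
                                      (c k * p k j - \<bar>c k\<bar> * d j))
                                 (min (c k * f k) (c k * g k))) ` {1..m})"

definition upper_bound :: "nat \<Rightarrow> real \<Rightarrow> real" where
  "upper_bound i t = Min ((\<lambda>j. min (min (\<bar>c i\<bar> * (t - h j) / w j + c i * p i j)
                                      (c i * p i j + \<bar>c i\<bar> * d j))
                                 (max (c i * f i) (c i * g i))) ` {1..m})"

lemma lower_bound_le_iff:
  "lower_bound k t \<le> y \<longleftrightarrow>
     (\<forall>j\<in>{1..m}. max (\<bar>c k\<bar> * (h j - t) / w j + c k * p k j) (lowq p d c f g k j) \<le> y)"
  unfolding lower_bound_def lowq_def using m_pos by (subst Max_le_iff) (auto simp: max.assoc)

lemma le_upper_bound_iff:
  "y \<le> upper_bound i t \<longleftrightarrow>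
     (\<forall>j\<in>{1..m}. y \<le> min (\<bar>c i\<bar> * (t - h j) / w j + c i * p i j) (uppq p d c f g i j))"
  unfolding upper_bound_def uppq_def using m_pos by (subst Min_ge_iff) (auto simp: min.assoc)

lemma cheb_le_iff: "cheb n x p j \<le> r \<longleftrightarrow> (\<forall>i\<in>{1..n}. \<bar>x i - p i j\<bar> \<le> r)"
  unfolding cheb_def using n_pos by (subst Max_le_iff) auto

lemma objective_le_iff:
  "objective n m p w h x \<le> t \<longleftrightarrow> (\<forall>j\<in>{1..m}. \<forall>i\<in>{1..n}. w j * \<bar>x i - p i j\<bar> + h j \<le> t)"
proof -
  have "w j * cheb n x p j + h j \<le> t \<longleftrightarrow> (\<forall>i\<in>{1..n}. w j * \<bar>x i - p i j\<bar> + h j \<le> t)"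
    if j: "j \<in> {1..m}" for j
  proof -
    have wj: "w j > 0"
      using w_pos j by auto
    have "w j * cheb n x p j + h j \<le> t \<longleftrightarrow> cheb n x p j \<le> (t - h j) / w j"
      using wj by (simp add: pos_le_divide_eq algebra_simps)
    also have "\<dots> \<longleftrightarrow> (\<forall>i\<in>{1..n}. w j * \<bar>x i - p i j\<bar> + h j \<le> t)"
      using wj by (simp add: cheb_le_iff pos_le_divide_eq algebra_simps)
    finally show ?thesis .
  qed
  then show ?thesis
    unfolding objective_def using m_pos by (subst Max_le_iff) auto
qed

lemma coordinate_constraints_iff_bounds:
  assumes i: "i \<in> {1..n}"
  shows "(\<forall>j\<in>{1..m}. \<bar>x i - p i j\<bar> \<le> d j \<and> w j * \<bar>x i - p i j\<bar> + h j \<le> t) \<and> f i \<le> x i \<and> x i \<le> g i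
     \<longleftrightarrow> lower_bound i t \<le> c i * x i \<and> c i * x i \<le> upper_bound i t"
proof -
  have ci: "c i \<noteq> 0" and fg: "f i \<le> g i"
    using i c_nonzero f_le_g by auto
  have dist: "\<bar>x i - p i j\<bar> \<le> d j \<longleftrightarrow>
      c i * p i j - \<bar>c i\<bar> * d j \<le> c i * x i \<and> c i * x i \<le> c i * p i j + \<bar>c i\<bar> * d j" for j
    using ci by (rule abs_diff_le_iff_scaled)
  have obj: "w j * \<bar>x i - p i j\<bar> + h j \<le> t \<longleftrightarrow>
      \<bar>c i\<bar> * (h j - t) / w j + c i * p i j \<le> c i * x i \<and> c i * x i \<le> \<bar>c i\<bar> * (t - h j) / w j + c i * p i j"
    if "j \<in> {1..m}" for j
    using ci w_pos that by (intro weighted_abs_diff_le_iff_scaled) auto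
  have box: "f i \<le> x i \<and> x i \<le> g i \<longleftrightarrow>
      min (c i * f i) (c i * g i) \<le> c i * x i \<and> c i * x i \<le> max (c i * f i) (c i * g i)"
    using ci fg by (rule interval_iff_scaled)
  have "1 \<in> {1..m}"
    using m_pos by simp
  then show ?thesis
    unfolding lower_bound_le_iff le_upper_bound_iff lowq_def uppq_def
    by (simp add: dist obj box ball_conj_distrib) blast
qed

lemma feasible_objective_le_iff:
  "feasible n m p d b c f g x \<and> objective n m p w h x \<le> t \<longleftrightarrow>
     (\<forall>i\<in>{1..n}. lower_bound i t \<le> c i * x i \<and> c i * x i \<le> upper_bound i t) \<and>
     (\<forall>i\<in>{1..n}. \<forall>k\<in>{1..n}. b i k + ereal (c k * x k) \<le> ereal (c i * x i))"
proof -
  have "feasible n m p d b c f g x \<and> objective n m p w h x \<le> t \<longleftrightarrow>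
     (\<forall>i\<in>{1..n}. (\<forall>j\<in>{1..m}. \<bar>x i - p i j\<bar> \<le> d j \<and> w j * \<bar>x i - p i j\<bar> + h j \<le> t)
        \<and> f i \<le> x i \<and> x i \<le> g i) \<and>
     (\<forall>i\<in>{1..n}. \<forall>k\<in>{1..n}. b i k + ereal (c k * x k) \<le> ereal (c i * x i))"
    unfolding feasible_def objective_le_iff cheb_le_iff by blast
  also have "\<dots> \<longleftrightarrow>
     (\<forall>i\<in>{1..n}. lower_bound i t \<le> c i * x i \<and> c i * x i \<le> upper_bound i t) \<and>
     (\<forall>i\<in>{1..n}. \<forall>k\<in>{1..n}. b i k + ereal (c k * x k) \<le> ereal (c i * x i))"
    by (simp only: coordinate_constraints_iff_bounds cong: ball_cong)
  finally show ?thesis .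
qed

definition theta_term :: "nat \<Rightarrow> nat \<Rightarrow> nat \<Rightarrow> nat \<Rightarrow> ereal" where
  "theta_term i k j l = max (max
       (ereal ((\<bar>c i\<bar> * w l * h j + \<bar>c k\<bar> * w j * h l) / (\<bar>c i\<bar> * w l + \<bar>c k\<bar> * w j))
         + ereal (w j * w l / (\<bar>c k\<bar> * w j + \<bar>c i\<bar> * w l))
           * (bstar n b i k - ereal (c i * p i j) + ereal (c k * p k l)))
       (ereal (h j) + ereal (w j / \<bar>c i\<bar>)
           * (bstar n b i k - ereal (c i * p i j) + ereal (lowq p d c f g k l))))
       (ereal (h l) + ereal (w l / \<bar>c k\<bar>)
           * (bstar n b i k - ereal (uppq p d c f g i j) + ereal (c k * p k l)))"

lemma theta_eq_Max_theta_term: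
  "theta n m p w d h b c f g = Max ((\<lambda>(i, k, j, l). theta_term i k j l) ` ({1..n} \<times> {1..n} \<times> {1..m} \<times> {1..m}))"
  unfolding theta_def theta_term_def by simp

lemma theta_term_MInf:
  assumes "i \<in> {1..n}" "k \<in> {1..n}" "j \<in> {1..m}" "l \<in> {1..m}" and "bstar n b i k = -\<infinity>"
  shows "theta_term i k j l = -\<infinity>"
proof -
  have "w j * w l / (\<bar>c k\<bar> * w j + \<bar>c i\<bar> * w l) > 0" "w j / \<bar>c i\<bar> > 0" "w l / \<bar>c k\<bar> > 0"
    using assms w_pos c_nonzero by (auto intro!: divide_pos_pos add_pos_pos mult_pos_pos)
  moreover have "ereal r * -\<infinity> = -\<infinity>" if "r > 0" for r
    using that by simp
  ultimately show ?thesis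
    unfolding theta_term_def assms(5)
    by (simp only: ereal_minus(2) plus_ereal.simps(4,5) max.idem)
qed

lemma theta_term_ereal:
  assumes "bstar n b i k = ereal \<beta>"
  shows "theta_term i k j l = ereal (max (max
      ((\<bar>c i\<bar> * w l * h j + \<bar>c k\<bar> * w j * h l) / (\<bar>c i\<bar> * w l + \<bar>c k\<bar> * w j)
         + w j * w l / (\<bar>c k\<bar> * w j + \<bar>c i\<bar> * w l) * (\<beta> - c i * p i j + c k * p k l))
      (h j + w j / \<bar>c i\<bar> * (\<beta> - c i * p i j + lowq p d c f g k l)))
      (h l + w l / \<bar>c k\<bar> * (\<beta> - uppq p d c f g i j + c k * p k l)))"
  unfolding theta_term_def assms
  by (simp only: ereal_minus(1) plus_ereal.simps(1) times_ereal.simps(1) ereal_max[symmetric])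

lemma bstar_add_lowq_le_uppq:
  assumes i: "i \<in> {1..n}" and k: "k \<in> {1..n}" and j: "j \<in> {1..m}" and l: "l \<in> {1..m}"
    and bstar_ik: "bstar n b i k = ereal \<beta>"
  shows "\<beta> + lowq p d c f g k l \<le> uppq p d c f g i j"
proof -
  have "bstar n b i k + ereal (max (Max ((\<lambda>l. c k * p k l - \<bar>c k\<bar> * d l) ` {1..m})) (min (c k * f k) (c k * g k)))
      \<le> ereal (min (Min ((\<lambda>j. c i * p i j + \<bar>c i\<bar> * d j) ` {1..m})) (max (c i * f i) (c i * g i)))"
    using constraints_compatible i k by blast
  then have "\<beta> + max (Max ((\<lambda>l. c k * p k l - \<bar>c k\<bar> * d l) ` {1..m})) (min (c k * f k) (c k * g k))
      \<le> min (Min ((\<lambda>j. c i * p i j + \<bar>c i\<bar> * d j) ` {1..m})) (max (c i * f i) (c i * g i))"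
    unfolding bstar_ik plus_ereal.simps(1) ereal_less_eq(3) .
  moreover have "lowq p d c f g k l
      \<le> max (Max ((\<lambda>l. c k * p k l - \<bar>c k\<bar> * d l) ` {1..m})) (min (c k * f k) (c k * g k))"
    unfolding lowq_def using l by (intro max.mono Max_ge) auto
  moreover have "min (Min ((\<lambda>j. c i * p i j + \<bar>c i\<bar> * d j) ` {1..m})) (max (c i * f i) (c i * g i))
      \<le> uppq p d c f g i j"
    unfolding uppq_def using j by (intro min.mono Min_le) auto
  ultimately show ?thesis
    by linarith
qed

lemma bstar_add_lower_bound_le_iff:
  assumes i: "i \<in> {1..n}" and k: "k \<in> {1..n}"
  shows "bstar n b i k + ereal (lower_bound k t) \<le> ereal (upper_bound i t) \<longleftrightarrow>
           (\<forall>j\<in>{1..m}. \<forall>l\<in>{1..m}. theta_term i k j l \<le> ereal t)"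
proof (cases rule: bstar_cases[OF i k, case_names MInf real])
  case MInf
  then show ?thesis
    using theta_term_MInf[OF i k] by simp
next
  case (real \<beta>)
  have "bstar n b i k + ereal (lower_bound k t) \<le> ereal (upper_bound i t) \<longleftrightarrow>
      lower_bound k t \<le> upper_bound i t - \<beta>"
    using real by (simp add: le_diff_eq add.commute)
  also have "\<dots> \<longleftrightarrow> (\<forall>l\<in>{1..m}. \<forall>j\<in>{1..m}.
      max (\<bar>c k\<bar> * (h l - t) / w l + c k * p k l) (lowq p d c f g k l) + \<beta>
        \<le> min (\<bar>c i\<bar> * (t - h j) / w j + c i * p i j) (uppq p d c f g i j))"
    (is "_ \<longleftrightarrow> (\<forall>l\<in>_. \<forall>j\<in>_. ?compatible l j)")
    unfolding lower_bound_le_iff by (simp add: le_diff_eq le_upper_bound_iff)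
  also have "\<dots> \<longleftrightarrow> (\<forall>l\<in>{1..m}. \<forall>j\<in>{1..m}. theta_term i k j l \<le> ereal t)"
  proof (intro ball_cong refl)
    fix l j
    assume l: "l \<in> {1..m}" and j: "j \<in> {1..m}"
    show "?compatible l j \<longleftrightarrow> theta_term i k j l \<le> ereal t"
      unfolding theta_term_ereal[OF real] ereal_less_eq(3)
      using c_nonzero w_pos i k j l bstar_add_lowq_le_uppq[OF i k j l real]
      by (intro shifted_bounds_compatible_iff) auto
  qed
  finally show ?thesis
    by auto
qed

lemma theta_le_iff:
  "theta n m p w d h b c f g \<le> ereal t \<longleftrightarrow>
     (\<forall>i\<in>{1..n}. \<forall>k\<in>{1..n}. bstar n b i k + ereal (lower_bound k t) \<le> ereal (upper_bound i t))"
proof -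
  have "{1..n} \<times> {1..n} \<times> {1..m} \<times> {1..m} \<noteq> {}"
    using n_pos m_pos by auto
  then have "theta n m p w d h b c f g \<le> ereal t \<longleftrightarrow>
      (\<forall>i\<in>{1..n}. \<forall>k\<in>{1..n}. \<forall>j\<in>{1..m}. \<forall>l\<in>{1..m}. theta_term i k j l \<le> ereal t)"
    unfolding theta_eq_Max_theta_term by (subst Max_le_iff) auto
  then show ?thesis
    by (simp add: bstar_add_lower_bound_le_iff)
qed

lemma theta_finite:
  obtains t where "theta n m p w d h b c f g = ereal t"
proof -
  let ?S = "(\<lambda>(i, k, j, l). theta_term i k j l) ` ({1..n} \<times> {1..n} \<times> {1..m} \<times> {1..m})"
  have one: "1 \<in> {1..n}" "1 \<in> {1..m}"
    using n_pos m_pos by auto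
  obtain i k j l where ikjl: "i \<in> {1..n}" "k \<in> {1..n}" "j \<in> {1..m}" "l \<in> {1..m}"
    and max_ikjl: "Max ?S = theta_term i k j l"
    using Max_in[of ?S] one by fastforce
  have not_PInf: "Max ?S \<noteq> \<infinity>"
    unfolding max_ikjl
    by (cases rule: bstar_cases[OF ikjl(1,2)])
      (auto simp: theta_term_MInf[OF ikjl] theta_term_ereal simp del: ereal_max)
  obtain \<beta> where "bstar n b 1 1 = ereal \<beta>"
    using bstar_diag_nonneg[of n b 1] by (cases rule: bstar_cases[OF one(1) one(1)]) auto
  then have "theta_term 1 1 1 1 \<noteq> -\<infinity>"
    by (simp add: theta_term_ereal del: ereal_max)
  moreover have "theta_term 1 1 1 1 \<le> Max ?S"
    using one by (intro Max_ge) force+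
  ultimately have "Max ?S \<noteq> -\<infinity>"
    by auto
  with not_PInf show thesis
    using that unfolding theta_eq_Max_theta_term by (cases "Max ?S") auto
qed

lemma theta_le_objective:
  assumes "feasible n m p d b c f g x"
  shows "theta n m p w d h b c f g \<le> ereal (objective n m p w h x)"
proof -
  let ?t = "objective n m p w h x"
  have bounds: "\<forall>i\<in>{1..n}. lower_bound i ?t \<le> c i * x i \<and> c i * x i \<le> upper_bound i ?t"
    and subsolution: "\<forall>i\<in>{1..n}. \<forall>k\<in>{1..n}. b i k + ereal (c k * x k) \<le> ereal (c i * x i)"
    using feasible_objective_le_iff[of x ?t] assms by auto
  have "bstar n b i k + ereal (lower_bound k ?t) \<le> ereal (upper_bound i ?t)"
    if i: "i \<in> {1..n}" and k: "k \<in> {1..n}" for i k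
  proof -
    have "bstar n b i k + ereal (lower_bound k ?t) \<le> bstar n b i k + ereal (c k * x k)"
      using bounds k by (intro add_left_mono) auto
    also have "\<dots> \<le> ereal (c i * x i)"
      using subsolution i k by (rule bstar_add_le_potential)
    also have "\<dots> \<le> ereal (upper_bound i ?t)"
      using bounds i by auto
    finally show ?thesis .
  qed
  then show ?thesis
    by (simp add: theta_le_iff)
qed

lemma optimal_if_parametrized:
  assumes theta: "theta n m p w d h b c f g = ereal t"
    and lower: "\<forall>k\<in>{1..n}. lower_bound k t \<le> v k"
    and upper: "\<forall>i\<in>{1..n}. \<forall>k\<in>{1..n}. bstar n b i k + ereal (v k) \<le> ereal (upper_bound i t)"
    and x: "\<forall>i\<in>{1..n}. x i = real_of_ereal (bstar_mult n b v i) / c i"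
  shows "feasible n m p d b c f g x \<and> objective n m p w h x = t"
proof -
  have y: "bstar_mult n b v i = ereal (c i * x i)" if "i \<in> {1..n}" for i
    using x c_nonzero bstar_mult_real that by simp
  have "lower_bound i t \<le> c i * x i \<and> c i * x i \<le> upper_bound i t" if i: "i \<in> {1..n}" for i
  proof
    have "ereal (lower_bound i t) \<le> ereal (v i)"
      using lower i by simp
    also have "\<dots> \<le> bstar_mult n b v i"
      using i by (rule le_bstar_mult)
    finally show "lower_bound i t \<le> c i * x i"
      using y[OF i] by simp
    have "bstar_mult n b v i \<le> ereal (upper_bound i t)"
      using upper i by (simp add: bstar_mult_le_iff)
    then show "c i * x i \<le> upper_bound i t"
      using y[OF i] by simp
  qed
  moreover have "b i k + ereal (c k * x k) \<le> ereal (c i * x i)"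
    if "i \<in> {1..n}" "k \<in> {1..n}" for i k
    using bstar_mult_subsolution[OF that, of v] y that by simp
  ultimately have "feasible n m p d b c f g x \<and> objective n m p w h x \<le> t"
    by (simp add: feasible_objective_le_iff)
  moreover from this have "t \<le> objective n m p w h x"
    using theta_le_objective theta by fastforce
  ultimately show ?thesis
    by simp
qed

lemma feasible_objective_le_imp_parametrized:
  assumes "feasible n m p d b c f g x" "objective n m p w h x \<le> t"
  shows "\<forall>k\<in>{1..n}. lower_bound k t \<le> c k * x k"
    and "\<forall>i\<in>{1..n}. \<forall>k\<in>{1..n}. bstar n b i k + ereal (c k * x k) \<le> ereal (upper_bound i t)"
    and "\<forall>i\<in>{1..n}. x i = real_of_ereal (bstar_mult n b (\<lambda>k. c k * x k) i) / c i"
proof -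
  have bounds: "\<forall>i\<in>{1..n}. lower_bound i t \<le> c i * x i \<and> c i * x i \<le> upper_bound i t"
    and subsolution: "\<forall>i\<in>{1..n}. \<forall>k\<in>{1..n}. b i k + ereal (c k * x k) \<le> ereal (c i * x i)"
    using feasible_objective_le_iff[of x t] assms by auto
  show "\<forall>k\<in>{1..n}. lower_bound k t \<le> c k * x k"
    using bounds by auto
  have "bstar n b i k + ereal (c k * x k) \<le> ereal (upper_bound i t)"
    if i: "i \<in> {1..n}" and k: "k \<in> {1..n}" for i k
  proof -
    have "bstar n b i k + ereal (c k * x k) \<le> ereal (c i * x i)"
      using subsolution i k by (rule bstar_add_le_potential)
    also have "\<dots> \<le> ereal (upper_bound i t)"
      using bounds i by simp
    finally show ?thesis .
  qed
  then show "\<forall>i\<in>{1..n}. \<forall>k\<in>{1..n}. bstar n b i k + ereal (c k * x k) \<le> ereal (upper_bound i t)"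
    by blast
  show "\<forall>i\<in>{1..n}. x i = real_of_ereal (bstar_mult n b (\<lambda>k. c k * x k) i) / c i"
    using bstar_mult_potential[OF subsolution] c_nonzero by simp
qed

lemma optimal_iff_parametrized:
  assumes theta: "theta n m p w d h b c f g = ereal t"
  shows "feasible n m p d b c f g x \<and> objective n m p w h x = t \<longleftrightarrow>
    (\<exists>v. (\<forall>k\<in>{1..n}. lower_bound k t \<le> v k \<and>
              (\<forall>i\<in>{1..n}. bstar n b i k + ereal (v k) \<le> ereal (upper_bound i t))) \<and>
         (\<forall>i\<in>{1..n}. x i = real_of_ereal (bstar_mult n b v i) / c i))"
proof
  assume "feasible n m p d b c f g x \<and> objective n m p w h x = t"
  then show "\<exists>v. (\<forall>k\<in>{1..n}. lower_bound k t \<le> v k \<and>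
              (\<forall>i\<in>{1..n}. bstar n b i k + ereal (v k) \<le> ereal (upper_bound i t))) \<and>
         (\<forall>i\<in>{1..n}. x i = real_of_ereal (bstar_mult n b v i) / c i)"
    using feasible_objective_le_imp_parametrized[of x t] by (intro exI[of _ "\<lambda>k. c k * x k"]) auto
qed (use optimal_if_parametrized[OF theta] in blast)

lemma theta_attained:
  assumes theta: "theta n m p w d h b c f g = ereal t"
  shows "\<exists>x. feasible n m p d b c f g x \<and> objective n m p w h x = t"
proof
  let ?x = "\<lambda>i. real_of_ereal (bstar_mult n b (\<lambda>k. lower_bound k t) i) / c i"
  show "feasible n m p d b c f g ?x \<and> objective n m p w h ?x = t"
    using theta theta_le_iff[of t] by (intro optimal_if_parametrized) auto
qed

lemma le_Min_upper_bound_minus_bstar_iff: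
  assumes "k \<in> {1..n}"
  shows "ereal y \<le> Min ((\<lambda>i. ereal (upper_bound i t) - bstar n b i k) ` {1..n}) \<longleftrightarrow>
           (\<forall>i\<in>{1..n}. bstar n b i k + ereal y \<le> ereal (upper_bound i t))"
proof -
  have "ereal y \<le> ereal (upper_bound i t) - bstar n b i k \<longleftrightarrow>
      bstar n b i k + ereal y \<le> ereal (upper_bound i t)" if "i \<in> {1..n}" for i
    using bstar_not_PInf[OF that assms]
    by (cases "bstar n b i k") (auto simp: ereal_le_minus_iff add.commute)
  then show ?thesis
    using n_pos by (subst Min_ge_iff) auto
qed

end

theorem corollary2:
  fixes n m :: nat
    and p :: "nat \<Rightarrow> nat \<Rightarrow> real"
    and w d h c f g :: "nat \<Rightarrow> real"
    and b :: "nat \<Rightarrow> nat \<Rightarrow> ereal"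
  assumes n: "n \<ge> 1" and m: "m \<ge> 1"
    and w: "\<forall>j\<in>{1..m}. w j > 0"
    and d: "\<forall>j\<in>{1..m}. d j > 0"
    and b_ninf: "\<forall>i\<in>{1..n}. \<forall>k\<in>{1..n}. b i k \<noteq> \<infinity>"
    and c: "\<forall>i\<in>{1..n}. c i \<noteq> 0"
    and fg: "\<forall>i\<in>{1..n}. f i \<le> g i"
    and cyc: "\<forall>i\<in>{1..n}. \<forall>l\<in>{1..n}. \<forall>q. q 0 = i \<and> q l = i \<and> (\<forall>t\<in>{1..<l}. q t \<in> {1..n})
               \<longrightarrow> path_weight b q l \<le> 0"
    and cond2: "\<forall>i\<in>{1..n}. \<forall>k\<in>{1..n}.
       bstar n b i k + ereal (max (Max ((\<lambda>l. c k * p k l - \<bar>c k\<bar> * d l) ` {1..m})) (min (c k * f k) (c k * g k)))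
         \<le> ereal (min (Min ((\<lambda>j. c i * p i j + \<bar>c i\<bar> * d j) ` {1..m})) (max (c i * f i) (c i * g i)))"
  shows "let \<theta> = theta n m p w d h b c f g in
     (\<exists>x. feasible n m p d b c f g x \<and> ereal (objective n m p w h x) = \<theta>) \<and>
     (\<forall>x. feasible n m p d b c f g x \<longrightarrow> \<theta> \<le> ereal (objective n m p w h x)) \<and>
     (\<forall>x. (feasible n m p d b c f g x \<and> ereal (objective n m p w h x) = \<theta>) \<longleftrightarrow>
        (\<exists>v :: nat \<Rightarrow> real.
           (\<forall>k\<in>{1..n}.
              Max ((\<lambda>j. max (max (\<bar>c k\<bar> * (h j - real_of_ereal \<theta>) / w j + c k * p k j)
                                  (c k * p k j - \<bar>c k\<bar> * d j))
                             (min (c k * f k) (c k * g k))) ` {1..m}) \<le> v k \<and>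
              ereal (v k) \<le> Min ((\<lambda>i. ereal (Min ((\<lambda>j. min (min (\<bar>c i\<bar> * (real_of_ereal \<theta> - h j) / w j + c i * p i j)
                                                          (c i * p i j + \<bar>c i\<bar> * d j))
                                                     (max (c i * f i) (c i * g i))) ` {1..m}))
                                   - bstar n b i k) ` {1..n})) \<and>
           (\<forall>i\<in>{1..n}. x i = real_of_ereal (Max ((\<lambda>k. bstar n b i k + ereal (v k)) ` {1..n})) / c i)))"
proof -
  interpret location_problem n b m p w d h c f g
    by (intro location_problem.intro nonpositive_cycles.intro location_problem_axioms.intro)
      (fact b_ninf cyc n m w c fg cond2)+
  obtain t where t: "theta n m p w d h b c f g = ereal t"
    by (rule theta_finite)
  show ?thesis
    unfolding Let_def t real_of_ereal.simps(1) lower_bound_def[symmetric] upper_bound_def[symmetric]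
      bstar_mult_def[symmetric]
    using theta_attained[OF t] theta_le_objective[unfolded t] optimal_iff_parametrized[OF t]
      le_Min_upper_bound_minus_bstar_iff
    by auto
qed

end
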